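(* Let $D$ be a division ring which is finite dimensional over its central subfield $K=Z(D)$, let ${}_DM$ be a finite dimensional left vector space over $D$ and let $\varphi:M\to M$ be a nilpotent $D$-linear map. Then $C_\varphi=\{\psi\in\mathrm{Hom}_D(M,M)\mid\psi\circ\varphi=\varphi\circ\psi\}$ is a $K$-subspace of $\mathrm{Hom}_D(M,M)$ and \[\dim_K(C_\varphi)\le\dim_K(D)\cdot\dim_D(\ker(\varphi))\cdot\dim_D(M).\] *)

theory Defs
  imports Main "HOL-Library.Function_Algebras"
begin

definition indep_over :: "'s::zero set \<Rightarrow> ('s \<Rightarrow> 'v::comm_monoid_add \<Rightarrow> 'v) \<Rightarrow> 'v set \<Rightarrow> bool" where
  "indep_over S sc B \<longleftrightarrow>
     (\<forall>F c. finite F \<and> F \<subseteq> B \<and> (\<forall>v\<in>F. c v \<in> S) \<and> (\<Sum>v\<in>F. sc (c v) v) = 0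
        \<longrightarrow> (\<forall>v\<in>F. c v = 0))"

definition span_over :: "'s set \<Rightarrow> ('s \<Rightarrow> 'v::comm_monoid_add \<Rightarrow> 'v) \<Rightarrow> 'v set \<Rightarrow> 'v set" where
  "span_over S sc B =
     {(\<Sum>v\<in>F. sc (c v) v) | F c. finite F \<and> F \<subseteq> B \<and> (\<forall>v\<in>F. c v \<in> S)}"

definition basis_over :: "'s::zero set \<Rightarrow> ('s \<Rightarrow> 'v::comm_monoid_add \<Rightarrow> 'v) \<Rightarrow> 'v set \<Rightarrow> 'v set \<Rightarrow> bool" where
  "basis_over S sc V B \<longleftrightarrow> B \<subseteq> V \<and> indep_over S sc B \<and> span_over S sc B = V"

definition fin_dim_over :: "'s::zero set \<Rightarrow> ('s \<Rightarrow> 'v::comm_monoid_add \<Rightarrow> 'v) \<Rightarrow> 'v set \<Rightarrow> bool" where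
  "fin_dim_over S sc V \<longleftrightarrow> (\<exists>B. finite B \<and> basis_over S sc V B)"

text \<open>Dimension = cardinality of a (finite) basis; meaningful for finite-dimensional spaces.\<close>
definition dim_over :: "'s::zero set \<Rightarrow> ('s \<Rightarrow> 'v::comm_monoid_add \<Rightarrow> 'v) \<Rightarrow> 'v set \<Rightarrow> nat" where
  "dim_over S sc V = card (SOME B. finite B \<and> basis_over S sc V B)"

definition subspace_over :: "'s set \<Rightarrow> ('s \<Rightarrow> 'v::comm_monoid_add \<Rightarrow> 'v) \<Rightarrow> 'v set \<Rightarrow> 'v set \<Rightarrow> bool" where
  "subspace_over S sc W V \<longleftrightarrow> W \<subseteq> V \<and> 0 \<in> W \<and>
     (\<forall>x\<in>W. \<forall>y\<in>W. x + y \<in> W) \<and> (\<forall>c\<in>S. \<forall>x\<in>W. sc c x \<in> W)"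

definition center :: "'a::ring set" where
  "center = {c. \<forall>x. c * x = x * c}"

definition left_vector_space :: "('a::division_ring \<Rightarrow> 'b::ab_group_add \<Rightarrow> 'b) \<Rightarrow> bool" where
  "left_vector_space smul \<longleftrightarrow>
     (\<forall>a x y. smul a (x + y) = smul a x + smul a y) \<and>
     (\<forall>a b x. smul (a + b) x = smul a x + smul b x) \<and>
     (\<forall>a b x. smul (a * b) x = smul a (smul b x)) \<and>
     (\<forall>x. smul 1 x = x)"

definition lin_map :: "('a \<Rightarrow> 'b::ab_group_add \<Rightarrow> 'b) \<Rightarrow> ('b \<Rightarrow> 'b) \<Rightarrow> bool" where
  "lin_map smul f \<longleftrightarrow> (\<forall>x y. f (x + y) = f x + f y) \<and> (\<forall>a x. f (smul a x) = smul a (f x))"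

definition Hom :: "('a \<Rightarrow> 'b::ab_group_add \<Rightarrow> 'b) \<Rightarrow> ('b \<Rightarrow> 'b) set" where
  "Hom smul = {f. lin_map smul f}"

text \<open>Action of scalars on Hom_D(M,M): (c psi)(x) = c psi(x) (a K-action for central c).\<close>
definition hom_smul :: "('a \<Rightarrow> 'b \<Rightarrow> 'b) \<Rightarrow> 'a \<Rightarrow> ('b \<Rightarrow> 'b) \<Rightarrow> ('b \<Rightarrow> 'b)" where
  "hom_smul smul c psi = (\<lambda>x. smul c (psi x))"

definition nilpotent_map :: "('b::zero \<Rightarrow> 'b) \<Rightarrow> bool" where
  "nilpotent_map f \<longleftrightarrow> (\<exists>n. (f ^^ n) = (\<lambda>_. 0))"

definition ker :: "('b \<Rightarrow> 'c::zero) \<Rightarrow> 'b set" where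
  "ker f = {x. f x = 0}"

definition centralizer :: "('a \<Rightarrow> 'b::ab_group_add \<Rightarrow> 'b) \<Rightarrow> ('b \<Rightarrow> 'b) \<Rightarrow> ('b \<Rightarrow> 'b) set" where
  "centralizer smul phi = {psi \<in> Hom smul. psi \<circ> phi = phi \<circ> psi}"

end

(*
  Put K = Z(D), d = dim_K D, m = dim_D M. Choose a finite set G that is a maximal
  D-independent family modulo \<phi>(M); then M = span_D G + \<phi>(M). If \<psi> commutes with \<phi> and
  vanishes on G, then ker \<psi> is \<phi>-stable and contains G, so M = ker \<psi> + \<phi>^n(M) for every n,
  and nilpotency gives \<psi> = 0. Hence restriction to G embeds C_\<phi> K-linearly into the maps
  G \<rightarrow> M, a K-space of dimension |G| d m. Finally |G| \<le> dim_D ker \<phi> by counting K-dimensions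
  (rank-nullity): a D-independent family of size n gives d n K-independent vectors {e g},
  with e running through a K-basis of D.
*)

theory Submission
  imports Defs "HOL.Vector_Spaces"
begin

lemma dim_over_eq_card_basis:
  assumes "fin_dim_over S sc V"
  shows "\<exists>B. finite B \<and> basis_over S sc V B \<and> dim_over S sc V = card B"
proof -
  let ?B = "SOME B. finite B \<and> basis_over S sc V B"
  have "finite ?B \<and> basis_over S sc V ?B"
    using assms unfolding fin_dim_over_def by (rule someI_ex)
  then show ?thesis
    unfolding dim_over_def by blast
qed

lemma sum_fun_apply: "sum f A x = (\<Sum>a\<in>A. f a x)"
  by (induction A rule: infinite_finite_induct) simp_all

lemma indep_overD:
  assumes "indep_over S sc B" "finite F" "F \<subseteq> B" "\<And>v. v \<in> F \<Longrightarrow> c v \<in> S"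
    "(\<Sum>v\<in>F. sc (c v) v) = 0" "v \<in> F"
  shows "c v = 0"
  using assms unfolding indep_over_def by blast

lemma (in vector_space) span_inv_image_Un_kernel:
  assumes f: "Vector_Spaces.linear scale scale f" and B: "B \<subseteq> range f" "range f \<subseteq> span B"
    and K: "{x. f x = 0} \<subseteq> span K"
  shows "span (inv f ` B \<union> K) = UNIV"
proof -
  interpret f: Vector_Spaces.linear scale scale f by (rule f)
  have "x \<in> span (inv f ` B \<union> K)" for x
  proof -
    obtain t r where t: "finite t" "t \<subseteq> B" and fx: "f x = (\<Sum>v\<in>t. scale (r v) v)"
      using B(2) unfolding span_explicit by blast
    define y where "y = (\<Sum>v\<in>t. scale (r v) (inv f v))"
    have "f y = f x"
      using t B(1) f_inv_into_f[of _ f UNIV]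
      by (auto simp: y_def fx f.sum f.scale intro!: sum.cong)
    then have "x - y \<in> span K"
      using K f.diff by auto
    moreover have "y \<in> span (inv f ` B)"
      unfolding y_def using t by (intro span_sum span_scale span_base) auto
    ultimately have "y + (x - y) \<in> span (inv f ` B \<union> K)"
      by (meson span_add span_mono subsetD sup_ge1 sup_ge2)
    then show ?thesis by simp
  qed
  then show ?thesis by blast
qed

lemma center_zero: "0 \<in> center"
  and center_one: "(1::'a::ring_1) \<in> center"
  by (simp_all add: center_def)

lemma center_iff: "a \<in> center \<longleftrightarrow> (\<forall>x. a * x = x * a)"
  by (simp add: center_def)

lemma center_commute: "a \<in> center \<Longrightarrow> a * x = x * a"
  by (simp add: center_iff)

lemma center_add: "a \<in> center \<Longrightarrow> b \<in> center \<Longrightarrow> a + b \<in> center"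
  unfolding center_iff by (metis distrib_left distrib_right)

lemma center_uminus: "a \<in> center \<Longrightarrow> - a \<in> center"
  unfolding center_iff by (metis mult_minus_left mult_minus_right)

lemma center_diff: "a \<in> center \<Longrightarrow> b \<in> center \<Longrightarrow> a - b \<in> center"
  by (metis center_add center_uminus diff_conv_add_uminus)

lemma center_mult: "a \<in> center \<Longrightarrow> b \<in> center \<Longrightarrow> a * b \<in> center"
  unfolding center_iff by (metis mult.assoc)

lemma center_inverse:
  fixes a :: "'a::division_ring"
  assumes a: "a \<in> center"
  shows "inverse a \<in> center"
proof (cases "a = 0")
  case False
  have "inverse a * x = x * inverse a" for x
  proof -
    have "inverse a * x = inverse a * (x * a) * inverse a"
      using False by (simp add: mult.assoc)
    also have "\<dots> = inverse a * (a * x) * inverse a"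
      by (simp add: center_commute[OF a])
    also have "\<dots> = x * inverse a"
      using False by (simp flip: mult.assoc)
    finally show ?thesis .
  qed
  then show ?thesis by (simp add: center_def)
qed (simp add: center_zero)

section \<open>The centre of a division ring as a field\<close>

text \<open>The centre is made a type so that the library's vector spaces over a field apply.\<close>

typedef (overloaded) ('a::division_ring) central = "center :: 'a set"
  using center_zero by blast

setup_lifting type_definition_central

instantiation central :: (division_ring) field
begin

lift_definition zero_central :: "'a central" is 0 by (rule center_zero)
lift_definition one_central :: "'a central" is 1 by (rule center_one)
lift_definition plus_central :: "'a central \<Rightarrow> 'a central \<Rightarrow> 'a central" is "(+)"
  by (rule center_add)
lift_definition minus_central :: "'a central \<Rightarrow> 'a central \<Rightarrow> 'a central" is "(-)"
  by (rule center_diff)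
lift_definition uminus_central :: "'a central \<Rightarrow> 'a central" is uminus
  by (rule center_uminus)
lift_definition times_central :: "'a central \<Rightarrow> 'a central \<Rightarrow> 'a central" is "(*)"
  by (rule center_mult)
lift_definition inverse_central :: "'a central \<Rightarrow> 'a central" is inverse
  by (rule center_inverse)
lift_definition divide_central :: "'a central \<Rightarrow> 'a central \<Rightarrow> 'a central" is "\<lambda>a b. a * inverse b"
  by (intro center_mult center_inverse)

instance
proof
  fix a b c :: "'a central"
  show "a * b * c = a * (b * c)" by transfer (rule mult.assoc)
  show "a * b = b * a" by transfer (rule center_commute)
  show "1 * a = a" by transfer simp
  show "a + b + c = a + (b + c)" by transfer (rule add.assoc)
  show "a + b = b + a" by transfer (rule add.commute)
  show "0 + a = a" by transfer simp
  show "- a + a = 0" by transfer simp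
  show "a - b = a + - b" by transfer simp
  show "(a + b) * c = a * c + b * c" by transfer (rule distrib_right)
  show "(0::'a central) \<noteq> 1" by transfer simp
  show "a \<noteq> 0 \<Longrightarrow> inverse a * a = 1" by transfer simp
  show "a div b = a * inverse b" by transfer simp
  show "inverse (0::'a central) = 0" by transfer simp
qed

end

lemma Rep_central_simps [simp]:
  "Rep_central 0 = 0" "Rep_central 1 = 1"
  "Rep_central (a + b) = Rep_central a + Rep_central b"
  "Rep_central (a * b) = Rep_central a * Rep_central b"
  by (transfer, simp)+

lemma Rep_central_eq_0_iff [simp]: "Rep_central a = 0 \<longleftrightarrow> a = 0"
  by transfer simp

section \<open>Left vector spaces over a division ring\<close>

locale left_vs =
  fixes smul :: "'a::division_ring \<Rightarrow> 'b::ab_group_add \<Rightarrow> 'b"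
  assumes left_vector_space: "left_vector_space smul"
begin

lemma smul_add_right: "smul a (x + y) = smul a x + smul a y"
  and smul_add_left: "smul (a + b) x = smul a x + smul b x"
  and smul_mult: "smul (a * b) x = smul a (smul b x)"
  and smul_one [simp]: "smul 1 x = x"
  using left_vector_space by (simp_all add: left_vector_space_def)

lemma additive_smul_right: "additive (smul a)"
  by unfold_locales (rule smul_add_right)

lemma additive_smul_left: "additive (\<lambda>a. smul a x)"
  by unfold_locales (rule smul_add_left)

lemmas smul_zero_right [simp] = additive.zero[OF additive_smul_right]
  and smul_diff_right = additive.diff[OF additive_smul_right]
  and smul_sum_right = additive.sum[OF additive_smul_right]

lemmas smul_zero_left [simp] = additive.zero[OF additive_smul_left]
  and smul_minus_left = additive.minus[OF additive_smul_left]
  and smul_diff_left = additive.diff[OF additive_smul_left]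
  and smul_sum_left = additive.sum[OF additive_smul_left]

lemma additive_lin_map: "lin_map smul f \<Longrightarrow> additive f"
  by unfold_locales (simp add: lin_map_def)

lemma lin_map_smul: "lin_map smul f \<Longrightarrow> f (smul a x) = smul a (f x)"
  by (simp add: lin_map_def)

lemmas lin_map_add = additive.add[OF additive_lin_map]
  and lin_map_zero = additive.zero[OF additive_lin_map]
  and lin_map_diff = additive.diff[OF additive_lin_map]

lemma lin_map_funpow: "lin_map smul f \<Longrightarrow> lin_map smul (f ^^ n)"
  by (induction n) (simp_all add: lin_map_def)

text \<open>Restriction of scalars to the centre: \<open>M\<close> is the space itself and \<open>Maps\<close> the space
  of all maps on it, both over the field of central elements.\<close>

definition central_smul :: "'a central \<Rightarrow> 'b \<Rightarrow> 'b" where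
  "central_smul c x = smul (Rep_central c) x"

definition central_hom_smul :: "'a central \<Rightarrow> ('b \<Rightarrow> 'b) \<Rightarrow> 'b \<Rightarrow> 'b" where
  "central_hom_smul c f = hom_smul smul (Rep_central c) f"

sublocale M: vector_space central_smul
  by unfold_locales (simp_all add: central_smul_def smul_add_right smul_add_left smul_mult)

sublocale Maps: vector_space central_hom_smul
  by unfold_locales
    (simp_all add: central_hom_smul_def hom_smul_def smul_add_right smul_add_left smul_mult fun_eq_iff)

lemma indep_over_center_iff: "indep_over center (hom_smul smul) B \<longleftrightarrow> Maps.independent B"
proof
  assume indep: "indep_over center (hom_smul smul) B"
  show "Maps.independent B"
    unfolding Maps.independent_explicit_finite_subsets
  proof (intro allI impI)
    fix t u
    assume "t \<subseteq> B" "finite t" "(\<Sum>v\<in>t. central_hom_smul (u v) v) = 0"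
    then have "Rep_central (u v) = 0" if "v \<in> t" for v
      using indep_overD[OF indep, of t "\<lambda>v. Rep_central (u v)" v] that
      by (simp add: Rep_central central_hom_smul_def)
    then show "\<forall>v\<in>t. u v = 0" by simp
  qed
next
  assume indep: "Maps.independent B"
  show "indep_over center (hom_smul smul) B"
    unfolding indep_over_def
  proof (intro allI impI)
    fix t c
    assume t: "finite t \<and> t \<subseteq> B \<and> (\<forall>v\<in>t. c v \<in> center) \<and> (\<Sum>v\<in>t. hom_smul smul (c v) v) = 0"
    then have "(\<Sum>v\<in>t. central_hom_smul (Abs_central (c v)) v) = 0"
      by (simp add: central_hom_smul_def Abs_central_inverse)
    then have "Abs_central (c v) = 0" if "v \<in> t" for v
      using Maps.independentD[OF indep, of t "\<lambda>v. Abs_central (c v)" v] t that by blast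
    then show "\<forall>v\<in>t. c v = 0"
      using t by (metis Abs_central_inverse Rep_central_simps(1))
  qed
qed

lemma span_over_center_eq: "span_over center (hom_smul smul) B = Maps.span B"
proof
  show "span_over center (hom_smul smul) B \<subseteq> Maps.span B"
  proof
    fix f assume "f \<in> span_over center (hom_smul smul) B"
    then obtain t c where t: "finite t" "t \<subseteq> B" "\<forall>v\<in>t. c v \<in> center"
      and f: "f = (\<Sum>v\<in>t. hom_smul smul (c v) v)"
      unfolding span_over_def by blast
    have "f = (\<Sum>v\<in>t. central_hom_smul (Abs_central (c v)) v)"
      unfolding f central_hom_smul_def using t(3) by (simp add: Abs_central_inverse)
    then show "f \<in> Maps.span B"
      unfolding Maps.span_explicit using t(1,2) by (auto intro!: exI[of _ "\<lambda>v. Abs_central (c v)"])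
  qed
  show "Maps.span B \<subseteq> span_over center (hom_smul smul) B"
  proof
    fix f assume "f \<in> Maps.span B"
    then obtain t u where t: "finite t" "t \<subseteq> B" and f: "f = (\<Sum>v\<in>t. central_hom_smul (u v) v)"
      unfolding Maps.span_explicit by blast
    have "f = (\<Sum>v\<in>t. hom_smul smul (Rep_central (u v)) v)"
      unfolding f central_hom_smul_def ..
    then show "f \<in> span_over center (hom_smul smul) B"
      unfolding span_over_def using t by (auto intro!: exI[of _ "\<lambda>v. Rep_central (u v)"] Rep_central)
  qed
qed

lemma Maps_subspace_if_subspace_over:
  "subspace_over center (hom_smul smul) W V \<Longrightarrow> Maps.subspace W"
  by (simp add: subspace_over_def Maps.subspace_def central_hom_smul_def Rep_central)

abbreviation dsubspace :: "'b set \<Rightarrow> bool" where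
  "dsubspace V \<equiv> subspace_over UNIV smul V UNIV"

lemma dsubspace_zero: "dsubspace {0}"
  by (simp add: subspace_over_def)

lemma dsubspace_sum: "dsubspace V \<Longrightarrow> (\<And>i. i \<in> I \<Longrightarrow> f i \<in> V) \<Longrightarrow> sum f I \<in> V"
  by (induction I rule: infinite_finite_induct) (auto simp: subspace_over_def)

lemma dsubspace_lin_comb: "dsubspace V \<Longrightarrow> G \<subseteq> V \<Longrightarrow> (\<Sum>g\<in>G. smul (c g) g) \<in> V"
  by (rule dsubspace_sum) (auto simp: subspace_over_def)

lemma span_over_subset: "dsubspace V \<Longrightarrow> B \<subseteq> V \<Longrightarrow> span_over UNIV smul B \<subseteq> V"
  unfolding span_over_def using dsubspace_lin_comb by blast

lemma dsubspace_range:
  assumes f: "lin_map smul f"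
  shows "dsubspace (range f)"
  unfolding subspace_over_def
proof (intro conjI ballI)
  show "0 \<in> range f"
    using rangeI[of f 0] by (simp add: lin_map_zero[OF f])
  show "x + y \<in> range f" if "x \<in> range f" "y \<in> range f" for x y
    using that by (auto simp flip: lin_map_add[OF f])
  show "smul c x \<in> range f" if "x \<in> range f" for c x
    using that by (auto simp flip: lin_map_smul[OF f])
qed simp

lemma dsubspace_ker: "lin_map smul f \<Longrightarrow> dsubspace (ker f)"
  by (simp add: subspace_over_def ker_def lin_map_add lin_map_smul lin_map_zero)

lemma M_linear_if_lin_map: "lin_map smul f \<Longrightarrow> Vector_Spaces.linear central_smul central_smul f"
  by (simp add: Vector_Spaces.linear_iff M.vector_space_axioms lin_map_add lin_map_smul central_smul_def)

lemma M_subspace_if_dsubspace: "dsubspace V \<Longrightarrow> M.subspace V"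
  by (simp add: subspace_over_def M.subspace_def central_smul_def)

text \<open>\<open>G\<close> is \<open>D\<close>-independent in the quotient by \<open>U\<close>. Only meaningful for finite \<open>G\<close>:
  for infinite \<open>G\<close> the sum is 0 by convention.\<close>

definition indep_modulo :: "'b set \<Rightarrow> 'b set \<Rightarrow> bool" where
  "indep_modulo U G \<longleftrightarrow> (\<forall>c. (\<Sum>g\<in>G. smul (c g) g) \<in> U \<longrightarrow> (\<forall>g\<in>G. c g = 0))"

lemma indep_moduloD: "indep_modulo U G \<Longrightarrow> (\<Sum>g\<in>G. smul (c g) g) \<in> U \<Longrightarrow> g \<in> G \<Longrightarrow> c g = 0"
  unfolding indep_modulo_def by blast

definition span_modulo :: "'b set \<Rightarrow> 'b set \<Rightarrow> 'b set" where
  "span_modulo U G = {x. \<exists>c u. u \<in> U \<and> x = (\<Sum>g\<in>G. smul (c g) g) + u}"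

lemma dsubspace_span_modulo:
  assumes U: "dsubspace U"
  shows "dsubspace (span_modulo U G)"
  unfolding subspace_over_def
proof (intro conjI ballI)
  show "0 \<in> span_modulo U G"
    using U unfolding span_modulo_def subspace_over_def by (auto intro!: exI[of _ "\<lambda>_. 0"])
  show "x + y \<in> span_modulo U G" if x: "x \<in> span_modulo U G" and y: "y \<in> span_modulo U G" for x y
  proof -
    obtain c u where "u \<in> U" "x = (\<Sum>g\<in>G. smul (c g) g) + u"
      using x unfolding span_modulo_def by blast
    moreover obtain c' u' where "u' \<in> U" "y = (\<Sum>g\<in>G. smul (c' g) g) + u'"
      using y unfolding span_modulo_def by blast
    ultimately have "x + y = (\<Sum>g\<in>G. smul (c g + c' g) g) + (u + u')" "u + u' \<in> U"
      using U by (simp_all add: smul_add_left sum.distrib add_ac subspace_over_def)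
    then show ?thesis
      unfolding span_modulo_def by (auto intro!: exI[of _ "\<lambda>g. c g + c' g"])
  qed
  show "smul a x \<in> span_modulo U G" if x: "x \<in> span_modulo U G" for a x
  proof -
    obtain c u where "u \<in> U" "x = (\<Sum>g\<in>G. smul (c g) g) + u"
      using x unfolding span_modulo_def by blast
    then have "smul a x = (\<Sum>g\<in>G. smul (a * c g) g) + smul a u" "smul a u \<in> U"
      using U by (simp_all add: smul_add_right smul_sum_right smul_mult subspace_over_def)
    then show ?thesis
      unfolding span_modulo_def by (auto intro!: exI[of _ "\<lambda>g. a * c g"])
  qed
qed simp

lemma subset_span_modulo:
  assumes "dsubspace U" "finite G"
  shows "G \<subseteq> span_modulo U G"
proof
  fix x assume "x \<in> G"
  then have "x = (\<Sum>g\<in>G. smul (if g = x then 1 else 0) g) + 0"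
    using assms(2) by (simp add: if_distrib[of "\<lambda>a. smul a _"] cong: if_cong)
  with assms(1) show "x \<in> span_modulo U G"
    unfolding span_modulo_def subspace_over_def by (auto intro!: exI[of _ "\<lambda>g. if g = x then 1 else 0"])
qed

lemma indep_over_if_indep_modulo_zero:
  assumes "finite G" "indep_modulo {0} G"
  shows "indep_over UNIV smul G"
  unfolding indep_over_def
proof (intro allI impI)
  fix t c assume t: "finite t \<and> t \<subseteq> G \<and> (\<forall>v\<in>t. c v \<in> UNIV) \<and> (\<Sum>v\<in>t. smul (c v) v) = 0"
  define c' where "c' g = (if g \<in> t then c g else 0)" for g
  have "(\<Sum>g\<in>G. smul (c' g) g) = (\<Sum>g\<in>t. smul (c g) g)"
    using t assms(1) by (intro sum.mono_neutral_cong_right) (auto simp: c'_def)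
  then have "\<forall>g\<in>G. c' g = 0"
    using assms(2) t by (simp add: indep_modulo_def)
  then show "\<forall>v\<in>t. c v = 0"
    using t unfolding c'_def by (metis subsetD)
qed

lemma smul_solve:
  assumes "c \<noteq> 0" "smul c x + y = w"
  shows "x = smul (- inverse c) y + smul (inverse c) w"
proof -
  have "smul (inverse c) w = x + smul (inverse c) y"
    using assms by (simp flip: assms(2) add: smul_add_right smul_mult[symmetric])
  then show ?thesis
    by (simp add: smul_minus_left)
qed

lemma in_span_modulo_if_dependent_insert:
  assumes U: "dsubspace U" and G: "finite G" "indep_modulo U G"
    and dependent: "\<not> indep_modulo U (insert x G)"
  shows "x \<in> span_modulo U G"
proof (cases "x \<in> G")
  case True
  then show ?thesis
    using subset_span_modulo[OF U G(1)] by blast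
next
  case False
  obtain c where c: "(\<Sum>g\<in>insert x G. smul (c g) g) \<in> U" "\<exists>g\<in>insert x G. c g \<noteq> 0"
    using dependent unfolding indep_modulo_def by blast
  define w where "w = (\<Sum>g\<in>insert x G. smul (c g) g)"
  have w: "smul (c x) x + (\<Sum>g\<in>G. smul (c g) g) = w"
    using G(1) False by (simp add: w_def)
  have "c x \<noteq> 0"
  proof
    assume "c x = 0"
    then have "\<forall>g\<in>G. c g = 0"
      using G(2) c(1) w by (simp add: indep_modulo_def w_def)
    with c(2) \<open>c x = 0\<close> show False by auto
  qed
  then have "x = (\<Sum>g\<in>G. smul (- inverse (c x) * c g) g) + smul (inverse (c x)) w"
    using smul_solve[OF _ w] by (simp add: smul_sum_right flip: smul_mult)
  moreover have "smul (inverse (c x)) w \<in> U"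
    using U c(1) by (simp add: subspace_over_def w_def)
  ultimately show ?thesis
    unfolding span_modulo_def by (auto intro!: exI[of _ "\<lambda>g. - inverse (c x) * c g"])
qed

lemma maximal_indep_modulo:
  assumes U: "dsubspace U"
    and bounded: "\<And>G. finite G \<Longrightarrow> G \<subseteq> S \<Longrightarrow> indep_modulo U G \<Longrightarrow> card G \<le> N"
  obtains G where "finite G" "G \<subseteq> S" "indep_modulo U G" "S \<subseteq> span_modulo U G"
proof -
  define P where "P n \<longleftrightarrow> (\<exists>G. finite G \<and> G \<subseteq> S \<and> indep_modulo U G \<and> card G = n)" for n
  have "P 0"
    unfolding P_def by (intro exI[of _ "{}"]) (simp add: indep_modulo_def)
  moreover have "P n \<Longrightarrow> n \<le> N" for n
    using bounded unfolding P_def by blast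
  ultimately obtain n where n: "P n" and maximal: "\<And>m. P m \<Longrightarrow> m \<le> n"
    using Nat.ex_has_greatest_nat[of P 0 N] by blast
  then obtain G where G: "finite G" "G \<subseteq> S" "indep_modulo U G" "card G = n"
    unfolding P_def by blast
  have "x \<in> span_modulo U G" if x: "x \<in> S" for x
  proof (cases "x \<in> G")
    case True
    then show ?thesis
      using subset_span_modulo[OF U G(1)] by blast
  next
    case False
    then have "\<not> P (Suc n)"
      using maximal by fastforce
    then have "\<not> indep_modulo U (insert x G)"
      using G x False unfolding P_def by auto
    then show ?thesis
      by (rule in_span_modulo_if_dependent_insert[OF U G(1,3)])
  qed
  with G that show ?thesis by blast
qed

text \<open>\<open>ker \<psi>\<close> is \<open>\<phi>\<close>-stable and contains \<open>G\<close>, so \<open>M = ker \<psi> + \<phi>\<^sup>m(M)\<close> for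
  every \<open>m\<close>; nilpotency finishes the argument.\<close>

lemma commuting_map_eq_0_if_vanishes_on_generators:
  assumes phi: "lin_map smul phi" "nilpotent_map phi"
    and generates: "span_modulo (range phi) G = UNIV"
    and psi: "lin_map smul psi" "psi \<circ> phi = phi \<circ> psi" "\<And>g. g \<in> G \<Longrightarrow> psi g = 0"
  shows "psi x = 0"
proof -
  have N: "dsubspace (ker psi)"
    by (rule dsubspace_ker[OF psi(1)])
  have phi_N: "(phi ^^ m) y \<in> ker psi" if "y \<in> ker psi" for y m
  proof (induction m)
    case (Suc m)
    then have "psi (phi ((phi ^^ m) y)) = 0"
      using psi(2) lin_map_zero[OF phi(1)] by (simp add: ker_def) (metis comp_apply)
    then show ?case by (simp add: ker_def)
  qed (use that in simp)
  have "\<exists>n\<in>ker psi. \<exists>y. z = n + (phi ^^ m) y" for z m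
  proof (induction m arbitrary: z)
    case 0
    show ?case using N by (metis add_0 funpow_0 subspace_over_def)
  next
    case (Suc m)
    obtain n y where n: "n \<in> ker psi" and z: "z = n + (phi ^^ m) y"
      using Suc.IH by blast
    obtain c y' where "y = (\<Sum>g\<in>G. smul (c g) g) + phi y'"
      using generates unfolding span_modulo_def by blast
    then have "z = (n + (phi ^^ m) (\<Sum>g\<in>G. smul (c g) g)) + (phi ^^ Suc m) y'"
      using z lin_map_add[OF lin_map_funpow[OF phi(1)]] by (simp add: add.assoc funpow_swap1)
    moreover have "n + (phi ^^ m) (\<Sum>g\<in>G. smul (c g) g) \<in> ker psi"
      using N n phi_N dsubspace_lin_comb[OF N] psi(3) by (simp add: subspace_over_def ker_def subset_iff)
    ultimately show ?case by blast
  qed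
  moreover obtain m where "phi ^^ m = (\<lambda>_. 0)"
    using phi(2) by (auto simp: nilpotent_map_def)
  ultimately have "x \<in> ker psi"
    by (metis add.right_neutral)
  then show ?thesis by (simp add: ker_def)
qed

lemma centralizer_subspace_over:
  assumes phi: "lin_map smul phi"
  shows "subspace_over center (hom_smul smul) (centralizer smul phi) (Hom smul)"
  unfolding subspace_over_def
proof (intro conjI ballI)
  show "centralizer smul phi \<subseteq> Hom smul"
    by (auto simp: centralizer_def)
  show "0 \<in> centralizer smul phi"
    using lin_map_zero[OF phi] by (auto simp: centralizer_def Hom_def lin_map_def fun_eq_iff)
  show "f + g \<in> centralizer smul phi" if "f \<in> centralizer smul phi" "g \<in> centralizer smul phi" for f g
    using that lin_map_add[OF phi]
    by (auto simp: centralizer_def Hom_def lin_map_def fun_eq_iff smul_add_right)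
  show "hom_smul smul c f \<in> centralizer smul phi" if "c \<in> center" "f \<in> centralizer smul phi" for c f
    using that lin_map_smul[OF phi]
    by (auto simp: centralizer_def Hom_def lin_map_def fun_eq_iff hom_smul_def smul_add_right
        center_commute simp flip: smul_mult)
qed

lemma inj_on_restrict_centralizer:
  assumes phi: "lin_map smul phi" "nilpotent_map phi"
    and generates: "span_modulo (range phi) G = UNIV"
  shows "inj_on (\<lambda>f x. if x \<in> G then f x else 0) (centralizer smul phi)"
proof (rule inj_onI)
  fix p q
  assume p: "p \<in> centralizer smul phi" and q: "q \<in> centralizer smul phi"
    and eq: "(\<lambda>x. if x \<in> G then p x else 0) = (\<lambda>x. if x \<in> G then q x else 0)"
  have "lin_map smul (\<lambda>x. p x - q x)" "(\<lambda>x. p x - q x) \<circ> phi = phi \<circ> (\<lambda>x. p x - q x)"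
    using p q lin_map_diff[OF phi(1)]
    by (auto simp: centralizer_def Hom_def lin_map_def fun_eq_iff smul_diff_right)
  moreover have "p g - q g = 0" if "g \<in> G" for g
    using fun_cong[OF eq, of g] that by simp
  ultimately have "p x - q x = 0" for x
    by (rule commuting_map_eq_0_if_vanishes_on_generators[OF phi generates])
  then show "p = q"
    by (simp add: fun_eq_iff)
qed

end

section \<open>Dimension over the centre\<close>

locale central_basis = left_vs smul for smul :: "'a::division_ring \<Rightarrow> 'b::ab_group_add \<Rightarrow> 'b" +
  fixes BD :: "'a set"
  assumes finite_BD: "finite BD"
    and basis_BD: "basis_over center (*) UNIV BD"
begin

text \<open>For a \<open>D\<close>-basis \<open>B\<close> of a subspace \<open>V\<close> this is a basis of \<open>V\<close> over the centre
  \<open>K\<close>, whence \<open>dim\<^sub>K V = dim\<^sub>K D \<cdot> dim\<^sub>D V\<close>.\<close>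

definition induced_basis :: "'b set \<Rightarrow> 'b set" where
  "induced_basis B = (\<lambda>(e, b). smul e b) ` (BD \<times> B)"

lemma indep_over_BD: "indep_over center (*) BD"
  using basis_BD by (simp add: basis_over_def)

lemma zero_notin_BD: "0 \<notin> BD"
  using indep_overD[OF indep_over_BD, of "{0}" "\<lambda>_. 1" 0] by (auto simp: center_one)

lemma card_BD_pos: "0 < card BD"
proof -
  have "1 \<in> span_over center (*) BD"
    using basis_BD by (simp add: basis_over_def)
  then have "BD \<noteq> {}"
    by (auto simp: span_over_def)
  then show ?thesis
    using finite_BD by (simp add: card_gt_0_iff)
qed

lemma finite_induced_basis: "finite B \<Longrightarrow> finite (induced_basis B)"
  by (simp add: induced_basis_def finite_BD)

lemma card_induced_basis_le: "finite B \<Longrightarrow> card (induced_basis B) \<le> card BD * card B"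
  unfolding induced_basis_def
  by (metis card_cartesian_product card_image_le finite_BD finite_cartesian_product)

lemma span_over_subset_M_span: "span_over UNIV smul B \<subseteq> M.span (induced_basis B)"
proof
  fix x assume "x \<in> span_over UNIV smul B"
  then obtain F c where F: "finite F" "F \<subseteq> B" and x: "x = (\<Sum>v\<in>F. smul (c v) v)"
    unfolding span_over_def by blast
  have "smul a v \<in> M.span (induced_basis B)" if v: "v \<in> B" for a v
  proof -
    have "a \<in> span_over center (*) BD"
      using basis_BD by (simp add: basis_over_def)
    then obtain E k where E: "finite E" "E \<subseteq> BD" "\<forall>e\<in>E. k e \<in> center"
      and a: "a = (\<Sum>e\<in>E. k e * e)"
      unfolding span_over_def by blast
    have "smul a v = (\<Sum>e\<in>E. central_smul (Abs_central (k e)) (smul e v))"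
      unfolding a central_smul_def smul_sum_left
      using E(3) by (simp add: smul_mult Abs_central_inverse)
    also have "\<dots> \<in> M.span (induced_basis B)"
      using E v by (intro M.span_sum M.span_scale M.span_base) (auto simp: induced_basis_def)
    finally show ?thesis .
  qed
  then show "x \<in> M.span (induced_basis B)"
    unfolding x using F by (auto intro: M.span_sum)
qed

lemma inj_on_induced_basis:
  assumes G: "finite G" "indep_modulo U G" and "0 \<in> U"
  shows "inj_on (\<lambda>(e, b). smul e b) (BD \<times> G)"
proof (rule inj_onI, clarify)
  fix e g e' g'
  assume in_BD: "e \<in> BD" "e' \<in> BD" and in_G: "g \<in> G" "g' \<in> G" and eq: "smul e g = smul e' g'"
  define c where "c h = (if h = g then e else 0) - (if h = g' then e' else 0)" for h
  have "(\<Sum>h\<in>G. smul (c h) h) = smul e g - smul e' g'"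
    using G(1) in_G by (simp add: c_def smul_diff_left sum_subtractf if_distrib[of "\<lambda>a. smul a _"]
        cong: if_cong)
  then have "c g = 0" "c g' = 0"
    using indep_moduloD[OF G(2)] eq \<open>0 \<in> U\<close> in_G by auto
  then show "e = e' \<and> g = g'"
    using zero_notin_BD in_BD by (auto simp: c_def split: if_splits)
qed

lemma card_induced_basis:
  "finite G \<Longrightarrow> indep_modulo U G \<Longrightarrow> 0 \<in> U \<Longrightarrow> card (induced_basis G) = card BD * card G"
  unfolding induced_basis_def
  by (simp add: card_image inj_on_induced_basis card_cartesian_product)

lemma induced_basis_indep_modulo:
  assumes G: "finite G" "indep_modulo U G" and "0 \<in> U"
    and t: "t \<subseteq> induced_basis G" and sum_in_U: "(\<Sum>v\<in>t. central_smul (u v) v) \<in> U"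
    and v: "v \<in> t"
  shows "u v = 0"
proof -
  define k where "k g e = (if smul e g \<in> t then Rep_central (u (smul e g)) else 0)" for g e
  have "(\<Sum>v\<in>t. central_smul (u v) v)
      = (\<Sum>v\<in>induced_basis G. if v \<in> t then central_smul (u v) v else 0)"
    using t finite_induced_basis[OF G(1)] by (simp add: sum.inter_restrict[symmetric] Int_absorb1)
  also have "\<dots> = (\<Sum>(e, g)\<in>BD \<times> G. smul (k g e) (smul e g))"
    unfolding induced_basis_def
    by (subst sum.reindex[OF inj_on_induced_basis[OF G \<open>0 \<in> U\<close>]])
      (simp add: case_prod_unfold k_def central_smul_def if_distrib[of "\<lambda>a. smul a _"] cong: if_cong)
  also have "\<dots> = (\<Sum>g\<in>G. smul (\<Sum>e\<in>BD. k g e * e) g)"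
    by (simp add: sum.cartesian_product[symmetric] sum.swap[of _ BD] smul_sum_left smul_mult)
  finally have "(\<Sum>e\<in>BD. k g e * e) = 0" if "g \<in> G" for g
    using indep_moduloD[OF G(2) _ that] sum_in_U by simp
  then have k0: "k g e = 0" if "g \<in> G" "e \<in> BD" for g e
    using indep_overD[OF indep_over_BD finite_BD subset_refl, of "k g" e] that
    by (simp add: k_def Rep_central center_zero)
  obtain e g where "e \<in> BD" "g \<in> G" "v = smul e g"
    using v t by (auto simp: induced_basis_def)
  with k0[of g e] v show ?thesis
    by (simp add: k_def)
qed

lemma independent_induced_basis_Un:
  assumes G: "finite G" "indep_modulo U G"
    and U: "M.subspace U" and B: "B \<subseteq> U" "M.independent B"
  shows "M.independent (induced_basis G \<union> B)" and "induced_basis G \<inter> B = {}"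
proof -
  have "0 \<in> U"
    using U by (rule M.subspace_0)
  note indep_modulo_U = induced_basis_indep_modulo[OF G this]
  show "induced_basis G \<inter> B = {}"
  proof (rule ccontr)
    assume "induced_basis G \<inter> B \<noteq> {}"
    then obtain v where "v \<in> induced_basis G" "v \<in> B" by blast
    then show False
      using indep_modulo_U[of "{v}" "\<lambda>_. 1" v] B(1) by (auto simp: central_smul_def)
  qed
  show "M.independent (induced_basis G \<union> B)"
    unfolding M.independent_explicit_finite_subsets
  proof (intro allI impI)
    fix t u
    assume t: "t \<subseteq> induced_basis G \<union> B" "finite t" and sum0: "(\<Sum>v\<in>t. central_smul (u v) v) = 0"
    define tG tB where "tG = t \<inter> induced_basis G" and "tB = t - induced_basis G"
    have split: "(\<Sum>v\<in>tG. central_smul (u v) v) + (\<Sum>v\<in>tB. central_smul (u v) v) = 0"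
      using sum0 t(2) unfolding tG_def tB_def by (simp add: sum.Int_Diff[symmetric])
    have tB: "tB \<subseteq> B" "finite tB"
      using t by (auto simp: tB_def)
    then have "(\<Sum>v\<in>tB. central_smul (u v) v) \<in> U"
      using B(1) by (intro M.subspace_sum[OF U] M.subspace_scale[OF U]) auto
    moreover have "(\<Sum>v\<in>tG. central_smul (u v) v) = - (\<Sum>v\<in>tB. central_smul (u v) v)"
      using split by (simp add: eq_neg_iff_add_eq_0)
    ultimately have "(\<Sum>v\<in>tG. central_smul (u v) v) \<in> U"
      using M.subspace_neg[OF U] by simp
    then have uG: "u v = 0" if "v \<in> tG" for v
      using indep_modulo_U[of tG u v] that by (simp add: tG_def)
    then have "(\<Sum>v\<in>tB. central_smul (u v) v) = 0"
      using split by simp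
    then have "u v = 0" if "v \<in> tB" for v
      using M.independentD[OF B(2) tB(2,1) _ that] by blast
    with uG show "\<forall>v\<in>t. u v = 0"
      by (auto simp: tG_def tB_def)
  qed
qed

end

section \<open>Finite-dimensional spaces and the centralizer\<close>

locale fin_dim_left_vs = central_basis smul BD
  for smul :: "'a::division_ring \<Rightarrow> 'b::ab_group_add \<Rightarrow> 'b" and BD +
  fixes BM :: "'b set"
  assumes finite_BM: "finite BM"
    and basis_BM: "basis_over UNIV smul UNIV BM"
begin

lemma M_span_induced_basis_BM: "M.span (induced_basis BM) = UNIV"
  using span_over_subset_M_span[of BM] basis_BM by (auto simp: basis_over_def)

lemma M_independent_bound: "M.independent B \<Longrightarrow> finite B \<and> card B \<le> card (induced_basis BM)"
  using M.independent_span_bound[OF finite_induced_basis[OF finite_BM]] M_span_induced_basis_BM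
  by blast

lemma card_le_if_indep_modulo_zero:
  assumes "finite G" "indep_modulo {0} G"
  shows "card G \<le> card BM"
proof -
  have "M.independent (induced_basis G)"
    using independent_induced_basis_Un(1)[OF assms M.subspace_single_0, of "{}"]
    by (simp add: M.independent_empty)
  then have "card (induced_basis G) \<le> card (induced_basis BM)"
    using M_independent_bound by blast
  then have "card BD * card G \<le> card BD * card BM"
    using card_induced_basis[OF assms singletonI] card_induced_basis_le[OF finite_BM] by linarith
  then show ?thesis
    using card_BD_pos by simp
qed

lemma dsubspace_finite_basis:
  assumes V: "dsubspace V"
  shows "\<exists>B. finite B \<and> basis_over UNIV smul V B"
proof -
  obtain G where G: "finite G" "G \<subseteq> V" "indep_modulo {0} G" "V \<subseteq> span_modulo {0} G"
    by (rule maximal_indep_modulo[OF dsubspace_zero card_le_if_indep_modulo_zero])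
  then have "V \<subseteq> span_over UNIV smul G"
    by (fastforce simp: span_modulo_def span_over_def)
  then have "span_over UNIV smul G = V"
    using span_over_subset[OF V G(2)] by blast
  then show ?thesis
    using G indep_over_if_indep_modulo_zero by (auto simp: basis_over_def)
qed

lemma complement_generators:
  assumes U: "dsubspace U"
  obtains G where "finite G" "indep_modulo U G" "span_modulo U G = UNIV"
proof -
  obtain G where G: "finite G" "G \<subseteq> BM" "indep_modulo U G" "BM \<subseteq> span_modulo U G"
  proof (rule maximal_indep_modulo[OF U, where S = BM and N = "card BM"])
    show "card G \<le> card BM" if "finite G" "G \<subseteq> BM" "indep_modulo U G" for G
      using card_mono[OF finite_BM that(2)] .
  qed
  then have "span_over UNIV smul BM \<subseteq> span_modulo U G"
    by (intro span_over_subset dsubspace_span_modulo U)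
  then have "span_modulo U G = UNIV"
    using basis_BM by (auto simp: basis_over_def)
  with G(1,3) show ?thesis
    by (rule that)
qed

text \<open>Over the centre, the induced basis of \<open>G\<close> together with a basis of \<open>\<phi>(M)\<close> is
  independent, while preimages of that basis of \<open>\<phi>(M)\<close> together with the induced basis of
  \<open>ker \<phi>\<close> span \<open>M\<close>.\<close>

lemma card_le_if_indep_modulo_range:
  assumes phi: "lin_map smul phi" and G: "finite G" "indep_modulo (range phi) G"
    and Bk: "finite Bk" "basis_over UNIV smul (ker phi) Bk"
  shows "card G \<le> card Bk"
proof -
  have R: "M.subspace (range phi)"
    using M_subspace_if_dsubspace dsubspace_range phi by blast
  obtain Bu where Bu: "Bu \<subseteq> range phi" "M.independent Bu" "range phi \<subseteq> M.span Bu"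
    using M.basis_exists by metis
  have "finite Bu"
    using M_independent_bound Bu(2) by blast
  have "ker phi \<subseteq> M.span (induced_basis Bk)"
    using Bk(2) span_over_subset_M_span by (auto simp: basis_over_def)
  then have "M.span (inv phi ` Bu \<union> induced_basis Bk) = UNIV"
    using M.span_inv_image_Un_kernel[OF M_linear_if_lin_map[OF phi] Bu(1,3)] by (simp add: ker_def)
  moreover have "M.independent (induced_basis G \<union> Bu)" "induced_basis G \<inter> Bu = {}"
    using independent_induced_basis_Un[OF G R Bu(1,2)] by auto
  ultimately have "card (induced_basis G \<union> Bu) \<le> card (inv phi ` Bu \<union> induced_basis Bk)"
    using M.independent_span_bound \<open>finite Bu\<close> finite_induced_basis[OF Bk(1)] by auto
  also have "\<dots> \<le> card Bu + card BD * card Bk"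
    using card_Un_le[of "inv phi ` Bu" "induced_basis Bk"] card_image_le[OF \<open>finite Bu\<close>, of "inv phi"]
      card_induced_basis_le[OF Bk(1)] by linarith
  finally have "card BD * card G \<le> card BD * card Bk"
    using card_Un_disjoint[OF finite_induced_basis[OF G(1)] \<open>finite Bu\<close>]
      card_induced_basis[OF G] R M.subspace_0 \<open>induced_basis G \<inter> Bu = {}\<close> by simp
  then show ?thesis
    using card_BD_pos by simp
qed

lemma restriction_in_Maps_span:
  assumes "finite G"
  shows "(\<lambda>x. if x \<in> G then f x else 0)
    \<in> Maps.span ((\<lambda>(g, w) x. if x = g then w else 0) ` (G \<times> induced_basis BM))"
    (is "_ \<in> Maps.span ?W")
proof -
  have "(\<lambda>x. if x = g then f g else 0) \<in> Maps.span ?W" if g: "g \<in> G" for g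
  proof -
    obtain t r where t: "finite t" "t \<subseteq> induced_basis BM" and fg: "f g = (\<Sum>v\<in>t. central_smul (r v) v)"
      using M_span_induced_basis_BM unfolding M.span_explicit by blast
    have "(\<lambda>x. if x = g then f g else 0) = (\<Sum>v\<in>t. central_hom_smul (r v) (\<lambda>x. if x = g then v else 0))"
      by (auto simp: fun_eq_iff fg sum_fun_apply central_hom_smul_def hom_smul_def central_smul_def)
    also have "\<dots> \<in> Maps.span ?W"
      using t g by (intro Maps.span_sum Maps.span_scale Maps.span_base) auto
    finally show ?thesis .
  qed
  moreover have "(\<lambda>x. if x \<in> G then f x else 0) = (\<Sum>g\<in>G. (\<lambda>x. if x = g then f g else 0))"
    using assms by (auto simp: fun_eq_iff sum_fun_apply)
  ultimately show ?thesis
    by (simp add: Maps.span_sum)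
qed

text \<open>Restriction to \<open>G\<close> is injective on the centralizer, and its image lies in the span of
  the maps supported in one point of \<open>G\<close> with value in the induced basis of \<open>M\<close>.\<close>

lemma centralizer_independent_card_le:
  assumes phi: "lin_map smul phi" "nilpotent_map phi"
    and Bk: "finite Bk" "basis_over UNIV smul (ker phi) Bk"
    and B: "B \<subseteq> centralizer smul phi" "Maps.independent B"
  shows "finite B \<and> card B \<le> card BD * card Bk * card BM"
proof -
  obtain G where G: "finite G" "indep_modulo (range phi) G"
    and generates: "span_modulo (range phi) G = UNIV"
    by (rule complement_generators[OF dsubspace_range[OF phi(1)]])
  define restrict :: "('b \<Rightarrow> 'b) \<Rightarrow> 'b \<Rightarrow> 'b" where
    "restrict f = (\<lambda>x. if x \<in> G then f x else 0)" for f
  define W where "W = (\<lambda>(g, w) x. if x = g then w else 0) ` (G \<times> induced_basis BM)"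
  interpret Maps_pair: vector_space_pair central_hom_smul central_hom_smul ..
  have linear: "Vector_Spaces.linear central_hom_smul central_hom_smul restrict"
    by (auto simp: Vector_Spaces.linear_iff Maps.vector_space_axioms restrict_def fun_eq_iff
        central_hom_smul_def hom_smul_def)
  have "Maps.span B \<subseteq> centralizer smul phi"
    using B(1) Maps.span_minimal Maps_subspace_if_subspace_over[OF centralizer_subspace_over[OF phi(1)]]
    by blast
  with inj_on_restrict_centralizer[OF phi generates] have inj: "inj_on restrict (Maps.span B)"
    unfolding restrict_def by (rule inj_on_subset)
  have "restrict ` B \<subseteq> Maps.span W"
    using restriction_in_Maps_span[OF G(1)] by (auto simp: restrict_def W_def)
  moreover have "finite W"
    using G(1) finite_induced_basis[OF finite_BM] by (simp add: W_def)
  ultimately have "finite (restrict ` B) \<and> card (restrict ` B) \<le> card W"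
    using Maps.independent_span_bound Maps_pair.linear_independent_injective_image[OF linear B(2) inj]
    by blast
  moreover have "inj_on restrict B"
    using inj Maps.span_superset by (rule inj_on_subset)
  ultimately have "finite B" and "card B \<le> card W"
    by (simp_all add: finite_image_iff card_image)
  note \<open>card B \<le> card W\<close>
  also have "card W \<le> card G * card (induced_basis BM)"
    unfolding W_def by (metis card_cartesian_product card_image_le finite_SigmaI G(1)
        finite_induced_basis[OF finite_BM])
  also have "\<dots> \<le> card Bk * (card BD * card BM)"
    using card_le_if_indep_modulo_range[OF phi(1) G Bk] card_induced_basis_le[OF finite_BM]
    by (rule mult_le_mono)
  finally show ?thesis
    using \<open>finite B\<close> by (simp add: ac_simps)
qed

lemma fin_dim_over_centralizer:
  assumes phi: "lin_map smul phi" "nilpotent_map phi"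
    and Bk: "finite Bk" "basis_over UNIV smul (ker phi) Bk"
  shows "fin_dim_over center (hom_smul smul) (centralizer smul phi)"
proof -
  have C: "Maps.subspace (centralizer smul phi)"
    by (rule Maps_subspace_if_subspace_over[OF centralizer_subspace_over[OF phi(1)]])
  obtain B where B: "B \<subseteq> centralizer smul phi" "Maps.independent B"
    "centralizer smul phi \<subseteq> Maps.span B"
    using Maps.basis_exists by metis
  then have "Maps.span B = centralizer smul phi"
    using Maps.span_minimal[OF B(1) C] by blast
  with B have "basis_over center (hom_smul smul) (centralizer smul phi) B"
    by (simp add: basis_over_def indep_over_center_iff span_over_center_eq)
  moreover have "finite B"
    using centralizer_independent_card_le[OF phi Bk B(1,2)] by blast
  ultimately show ?thesis
    unfolding fin_dim_over_def by blast
qed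

lemma card_basis_centralizer_le:
  assumes phi: "lin_map smul phi" "nilpotent_map phi"
    and Bk: "finite Bk" "basis_over UNIV smul (ker phi) Bk"
    and B: "basis_over center (hom_smul smul) (centralizer smul phi) B"
  shows "card B \<le> card BD * card Bk * card BM"
  using centralizer_independent_card_le[OF phi Bk] B
  by (simp add: basis_over_def indep_over_center_iff)

end

theorem corollary4p7:
  fixes smul :: "'a::division_ring \<Rightarrow> 'b::ab_group_add \<Rightarrow> 'b"
    and phi :: "'b \<Rightarrow> 'b"
  assumes "fin_dim_over (center :: 'a set) (*) (UNIV :: 'a set)"
    and "left_vector_space smul"
    and "fin_dim_over (UNIV :: 'a set) smul (UNIV :: 'b set)"
    and "lin_map smul phi"
    and "nilpotent_map phi"
  shows "subspace_over (center :: 'a set) (hom_smul smul) (centralizer smul phi) (Hom smul)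
     \<and> fin_dim_over (center :: 'a set) (hom_smul smul) (centralizer smul phi)
     \<and> dim_over (center :: 'a set) (hom_smul smul) (centralizer smul phi)
         \<le> dim_over (center :: 'a set) (*) (UNIV :: 'a set)
            * dim_over (UNIV :: 'a set) smul (ker phi)
            * dim_over (UNIV :: 'a set) smul (UNIV :: 'b set)"
proof -
  obtain BD :: "'a set" where BD: "finite BD" "basis_over center (*) UNIV BD"
    "dim_over (center :: 'a set) (*) UNIV = card BD"
    using dim_over_eq_card_basis[OF assms(1)] by blast
  obtain BM where BM: "finite BM" "basis_over UNIV smul UNIV BM" "dim_over UNIV smul UNIV = card BM"
    using dim_over_eq_card_basis[OF assms(3)] by blast
  interpret fin_dim_left_vs smul BD BM
    using assms(2) BD BM by unfold_locales
  have "fin_dim_over UNIV smul (ker phi)"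
    using dsubspace_finite_basis[OF dsubspace_ker[OF assms(4)]] by (simp add: fin_dim_over_def)
  then obtain Bk where Bk: "finite Bk" "basis_over UNIV smul (ker phi) Bk"
    "dim_over UNIV smul (ker phi) = card Bk"
    using dim_over_eq_card_basis by blast
  have C: "fin_dim_over center (hom_smul smul) (centralizer smul phi)"
    using fin_dim_over_centralizer[OF assms(4,5) Bk(1,2)] .
  then obtain BC where "finite BC" "basis_over center (hom_smul smul) (centralizer smul phi) BC"
    "dim_over center (hom_smul smul) (centralizer smul phi) = card BC"
    using dim_over_eq_card_basis by blast
  with card_basis_centralizer_le[OF assms(4,5) Bk(1,2)] BD BM Bk C
    centralizer_subspace_over[OF assms(4)]
  show ?thesis
    by simp
qed

end
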